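(* Let $G=(V=A\cup B,E,w)$ be a simple bipartite graph with weights $w\colon E\to\mathbb{R}_{\ge 0}$, let $b\colon V\to\mathbb{Z}_+$, and let $\varepsilon>0$. Let $F\subseteq E$ be a $b$-matching and let $p\colon B\to\mathbb{R}_{\ge 0}$ be prices such that (i) $F$ is $\varepsilon$-happy with respect to $p$, and (ii) every object $j\in B$ that is unsaturated by $F$ has $p(j)=0$. Then $w(F)\ge(1-\varepsilon)\,w(F^\ast)$, where $F^\ast$ is a $b$-matching of $G$ of maximum weight.
   Context: A $b$-matching is a set $F\subseteq E$ with $\deg_F(v)\le b(v)$ for all $v\in V$, where $\deg_F(v)$ is the number of edges of $F$ incident to $v$; $v$ is saturated by $F$ if $\deg_F(v)=b(v)$ and unsaturated if $\deg_F(v)<b(v)$. For $H\subseteq E$, $w(H)=\sum_{e\in H}w(e)$. Vertices of $A$ are called bidders and vertices of $B$ objects. $N(i)$ is the neighbor set of $i$ in $G$, and $F(i)$ is the set of objects matched to $i$ under $F$. Given prices $p\colon B\to\mathbb{R}_{\ge0}$, for a bidder $i\in A$ define $\pi(i)=\max\{\max_{k\in N(i)\setminus F(i)}\{(1-\varepsilon)w(i,k)-p(k)\},\,0\}$ (the inner max over an empty set is taken as $-\infty$). An edge $(i,j)\in F$ is $\varepsilon$-happy if $w(i,j)-p(j)\ge \pi(i)$. A bidder $i$ is $\varepsilon$-happy if all edges $(i,j)\in F$ are $\varepsilon$-happy and either $i$ is saturated by $F$ (and $\pi(i)\ge 0$), or $i$ is unsaturated by $F$ and $\pi(i)=0$.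 $F$ is $\varepsilon$-happy if every bidder $i\in A$ is $\varepsilon$-happy. *)

theory Defs
  imports Complex_Main
begin

(* Bipartite graph: bidders A, objects B (disjoint subsets of a vertex type 'v),
   edges E \<subseteq> A \<times> B written as pairs (i,j) with i a bidder and j an object. *)

definition deg :: "('v \<times> 'v) set \<Rightarrow> 'v \<Rightarrow> nat" where
  "deg F v = card {e \<in> F. fst e = v \<or> snd e = v}"

definition b_matching :: "'v set \<Rightarrow> 'v set \<Rightarrow> ('v \<times> 'v) set \<Rightarrow> ('v \<Rightarrow> nat) \<Rightarrow> ('v \<times> 'v) set \<Rightarrow> bool" where
  "b_matching A B E b F \<longleftrightarrow> F \<subseteq> E \<and> (\<forall>v \<in> A \<union> B. deg F v \<le> b v)"

definition wt :: "('v \<times> 'v \<Rightarrow> real) \<Rightarrow> ('v \<times> 'v) set \<Rightarrow> real" where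
  "wt w H = (\<Sum>e\<in>H. w e)"

definition max_weight_b_matching :: "'v set \<Rightarrow> 'v set \<Rightarrow> ('v \<times> 'v) set \<Rightarrow> ('v \<Rightarrow> nat) \<Rightarrow> ('v \<times> 'v \<Rightarrow> real) \<Rightarrow> ('v \<times> 'v) set \<Rightarrow> bool" where
  "max_weight_b_matching A B E b w F \<longleftrightarrow>
     b_matching A B E b F \<and> (\<forall>F'. b_matching A B E b F' \<longrightarrow> wt w F' \<le> wt w F)"

definition nbrs :: "('v \<times> 'v) set \<Rightarrow> 'v \<Rightarrow> 'v set" where
  "nbrs E i = {k. (i, k) \<in> E}"

(* pi(i) = max( max_{k in N(i) \ F(i)} ((1-eps) w(i,k) - p(k)), 0 ); the inner max over
   the empty set is -infinity, so then pi(i) = 0 *)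
definition util :: "('v \<times> 'v) set \<Rightarrow> ('v \<times> 'v \<Rightarrow> real) \<Rightarrow> real \<Rightarrow> ('v \<Rightarrow> real) \<Rightarrow> ('v \<times> 'v) set \<Rightarrow> 'v \<Rightarrow> real" where
  "util E w eps p F i =
     (let S = nbrs E i - nbrs F i in
      if S = {} then 0 else max (Max ((\<lambda>k. (1 - eps) * w (i, k) - p k) ` S)) 0)"

definition happy_edge :: "('v \<times> 'v) set \<Rightarrow> ('v \<times> 'v \<Rightarrow> real) \<Rightarrow> real \<Rightarrow> ('v \<Rightarrow> real) \<Rightarrow> ('v \<times> 'v) set \<Rightarrow> 'v \<Rightarrow> 'v \<Rightarrow> bool" where
  "happy_edge E w eps p F i j \<longleftrightarrow> w (i, j) - p j \<ge> util E w eps p F i"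

definition happy_bidder :: "('v \<times> 'v) set \<Rightarrow> ('v \<Rightarrow> nat) \<Rightarrow> ('v \<times> 'v \<Rightarrow> real) \<Rightarrow> real \<Rightarrow> ('v \<Rightarrow> real) \<Rightarrow> ('v \<times> 'v) set \<Rightarrow> 'v \<Rightarrow> bool" where
  "happy_bidder E b w eps p F i \<longleftrightarrow>
     (\<forall>j. (i, j) \<in> F \<longrightarrow> happy_edge E w eps p F i j) \<and>
     ((deg F i = b i \<and> util E w eps p F i \<ge> 0) \<or> (deg F i < b i \<and> util E w eps p F i = 0))"

definition happy :: "'v set \<Rightarrow> ('v \<times> 'v) set \<Rightarrow> ('v \<Rightarrow> nat) \<Rightarrow> ('v \<times> 'v \<Rightarrow> real) \<Rightarrow> real \<Rightarrow> ('v \<Rightarrow> real) \<Rightarrow> ('v \<times> 'v) set \<Rightarrow> bool" where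
  "happy A E b w eps p F \<longleftrightarrow> (\<forall>i \<in> A. happy_bidder E b w eps p F i)"

end

theory Submission
  imports Defs
begin

text \<open>
  Give every edge (i, j) the potential \<pi>(i) + p(j). Happiness makes every edge of F worth at
  least its potential, while every edge outside F has (1 - \<epsilon>) times its weight bounded by its
  potential. A vertex carrying positive potential is saturated by F, so it lies on at least as
  many edges of F - F* as of F* - F; summing vertex by vertex, the potential of F* - F is
  therefore at most that of F - F*. This gives (1 - \<epsilon>) w(F* - F) \<le> w(F - F*), and the common
  edges F \<inter> F* only lose the factor 1 - \<epsilon>.
\<close>

lemma sum_by_fibres:
  assumes "finite S" "h ` S \<subseteq> T" "finite T"
  shows "(\<Sum>e\<in>S. f (h e)) = (\<Sum>v\<in>T. of_nat (card {e\<in>S. h e = v}) * (f v :: 'b :: comm_semiring_1))"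
proof -
  have "(\<Sum>e\<in>S. f (h e)) = (\<Sum>v\<in>T. \<Sum>e\<in>{e\<in>S. h e = v}. f (h e))"
    using sum.group[OF assms(1,3,2), of "\<lambda>e. f (h e)"] by simp
  also have "\<dots> = (\<Sum>v\<in>T. \<Sum>e\<in>{e\<in>S. h e = v}. f v)"
    by (intro sum.cong) auto
  finally show ?thesis by simp
qed

lemma deg_bipartite:
  assumes "S \<subseteq> A \<times> B" "A \<inter> B = {}"
  shows "i \<in> A \<Longrightarrow> deg S i = card {e\<in>S. fst e = i}"
    and "j \<in> B \<Longrightarrow> deg S j = card {e\<in>S. snd e = j}"
proof -
  show "deg S i = card {e\<in>S. fst e = i}" if "i \<in> A"
  proof -
    have "{e\<in>S. fst e = i \<or> snd e = i} = {e\<in>S. fst e = i}"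
      using assms that by auto
    then show ?thesis unfolding deg_def by simp
  qed
  show "deg S j = card {e\<in>S. snd e = j}" if "j \<in> B"
  proof -
    have "{e\<in>S. fst e = j \<or> snd e = j} = {e\<in>S. snd e = j}"
      using assms that by auto
    then show ?thesis unfolding deg_def by simp
  qed
qed

lemma sum_bipartite_by_deg:
  fixes f g :: "'v \<Rightarrow> real"
  assumes "finite S" "S \<subseteq> A \<times> B" "A \<inter> B = {}" "finite A" "finite B"
  shows "(\<Sum>e\<in>S. f (fst e) + g (snd e))
           = (\<Sum>i\<in>A. real (deg S i) * f i) + (\<Sum>j\<in>B. real (deg S j) * g j)"
proof -
  have "(\<Sum>e\<in>S. f (fst e)) = (\<Sum>i\<in>A. real (card {e\<in>S. fst e = i}) * f i)"
    using assms(2) by (intro sum_by_fibres assms(1,4)) auto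
  also have "\<dots> = (\<Sum>i\<in>A. real (deg S i) * f i)"
    using deg_bipartite(1)[OF assms(2,3)] by simp
  finally have bidders: "(\<Sum>e\<in>S. f (fst e)) = (\<Sum>i\<in>A. real (deg S i) * f i)" .
  have "(\<Sum>e\<in>S. g (snd e)) = (\<Sum>j\<in>B. real (card {e\<in>S. snd e = j}) * g j)"
    using assms(2) by (intro sum_by_fibres assms(1,5)) auto
  also have "\<dots> = (\<Sum>j\<in>B. real (deg S j) * g j)"
    using deg_bipartite(2)[OF assms(2,3)] by simp
  finally have objects: "(\<Sum>e\<in>S. g (snd e)) = (\<Sum>j\<in>B. real (deg S j) * g j)" .
  show ?thesis
    using bidders objects by (simp add: sum.distrib)
qed

lemma sum_bipartite_mono_deg:
  fixes f g :: "'v \<Rightarrow> real"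
  assumes "finite S" "S \<subseteq> A \<times> B" "finite T" "T \<subseteq> A \<times> B"
    and "A \<inter> B = {}" "finite A" "finite B"
    and "\<And>i. i \<in> A \<Longrightarrow> f i \<ge> 0" "\<And>j. j \<in> B \<Longrightarrow> g j \<ge> 0"
    and "\<And>i. i \<in> A \<Longrightarrow> f i \<noteq> 0 \<Longrightarrow> deg T i \<le> deg S i"
    and "\<And>j. j \<in> B \<Longrightarrow> g j \<noteq> 0 \<Longrightarrow> deg T j \<le> deg S j"
  shows "(\<Sum>e\<in>T. f (fst e) + g (snd e)) \<le> (\<Sum>e\<in>S. f (fst e) + g (snd e))"
proof -
  have "(\<Sum>i\<in>A. real (deg T i) * f i) \<le> (\<Sum>i\<in>A. real (deg S i) * f i)"
    using assms(8,10) by (intro sum_mono) (metis mult_right_mono mult_zero_right of_nat_mono)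
  moreover have "(\<Sum>j\<in>B. real (deg T j) * g j) \<le> (\<Sum>j\<in>B. real (deg S j) * g j)"
    using assms(9,11) by (intro sum_mono) (metis mult_right_mono mult_zero_right of_nat_mono)
  ultimately show ?thesis
    using sum_bipartite_by_deg[OF assms(1,2,5-7)] sum_bipartite_by_deg[OF assms(3,4,5-7)] by simp
qed

lemma deg_Diff_Int:
  assumes "finite F"
  shows "deg F v = deg (F - G) v + deg (F \<inter> G) v"
proof -
  have "{e\<in>F. fst e = v \<or> snd e = v}
          = {e\<in>F - G. fst e = v \<or> snd e = v} \<union> {e\<in>F \<inter> G. fst e = v \<or> snd e = v}"
    by auto
  then show ?thesis
    unfolding deg_def using assms by (subst card_Un_disjoint[symmetric]) auto
qed

lemma deg_Diff_le_Diff: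
  assumes "finite F" "finite G" "deg G v \<le> deg F v"
  shows "deg (G - F) v \<le> deg (F - G) v"
  using assms deg_Diff_Int[OF assms(1), where G = G and v = v]
    deg_Diff_Int[OF assms(2), where G = F and v = v]
  by (simp add: Int_commute)

lemma util_nonneg: "util E w eps p F i \<ge> 0"
  unfolding util_def Let_def by auto

lemma util_ge_unmatched_edge:
  assumes "(i, k) \<in> E" "(i, k) \<notin> F" "finite (nbrs E i)"
  shows "(1 - eps) * w (i, k) - p k \<le> util E w eps p F i"
proof -
  let ?S = "nbrs E i - nbrs F i"
  have k: "k \<in> ?S" using assms(1,2) by (auto simp: nbrs_def)
  then have "(1 - eps) * w (i, k) - p k \<le> Max ((\<lambda>k. (1 - eps) * w (i, k) - p k) ` ?S)"
    using assms(3) by (intro Max_ge) auto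
  then show ?thesis using k unfolding util_def Let_def by auto
qed

lemma happy_bidder_saturated:
  assumes "happy_bidder E b w eps p F i" "util E w eps p F i \<noteq> 0"
  shows "deg F i = b i"
  using assms unfolding happy_bidder_def by auto

lemma happy_exchange_bound:
  assumes "finite A" "finite B" "A \<inter> B = {}" "E \<subseteq> A \<times> B"
    and "\<forall>j \<in> B. p j \<ge> 0"
    and "b_matching A B E b F" "b_matching A B E b F'"
    and "happy A E b w eps p F"
    and "\<forall>j \<in> B. deg F j < b j \<longrightarrow> p j = 0"
  shows "(1 - eps) * wt w (F' - F) \<le> wt w (F - F')"
proof -
  define pi where "pi = util E w eps p F"
  define pot where "pot H = (\<Sum>e\<in>H. pi (fst e) + p (snd e))" for H
  have finE: "finite E"
    using assms(1,2,4) finite_subset by blast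
  have FE: "F \<subseteq> E" "F' \<subseteq> E"
    using assms(6,7) unfolding b_matching_def by auto
  then have fin: "finite F" "finite F'" "finite (F - F')" "finite (F' - F)"
    using finE finite_subset by blast+
  have bip: "F - F' \<subseteq> A \<times> B" "F' - F \<subseteq> A \<times> B"
    using FE assms(4) by auto
  have happy_i: "happy_bidder E b w eps p F i" if "i \<in> A" for i
    using assms(8) that unfolding happy_def by auto
  have "pot (F - F') \<le> wt w (F - F')"
    unfolding pot_def wt_def
  proof (rule sum_mono)
    fix e assume e: "e \<in> F - F'"
    then obtain i j where ij: "e = (i, j)" "(i, j) \<in> F" "i \<in> A"
      using bip by auto
    then have "happy_edge E w eps p F i j"
      using happy_i unfolding happy_bidder_def by blast
    then show "pi (fst e) + p (snd e) \<le> w e"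
      using ij(1) unfolding happy_edge_def pi_def by auto
  qed
  moreover have "(1 - eps) * wt w (F' - F) \<le> pot (F' - F)"
    unfolding pot_def wt_def sum_distrib_left
  proof (rule sum_mono)
    fix e assume e: "e \<in> F' - F"
    then obtain i j where ij: "e = (i, j)" "(i, j) \<in> E" "(i, j) \<notin> F"
      using FE by (cases e) auto
    have "finite (nbrs E i)"
      using assms(2,4) by (auto simp: nbrs_def intro: finite_subset)
    then show "(1 - eps) * w e \<le> pi (fst e) + p (snd e)"
      using util_ge_unmatched_edge[OF ij(2,3), where eps = eps and w = w and p = p] ij(1)
      unfolding pi_def by auto
  qed
  moreover have "pot (F' - F) \<le> pot (F - F')"
    unfolding pot_def
  proof (rule sum_bipartite_mono_deg[OF fin(3) bip(1) fin(4) bip(2) assms(3,1,2)])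
    show "pi i \<ge> 0" for i
      unfolding pi_def by (rule util_nonneg)
    show "p j \<ge> 0" if "j \<in> B" for j
      using assms(5) that by auto
    have deg_F': "deg F' v \<le> b v" if "v \<in> A \<union> B" for v
      using assms(7) that unfolding b_matching_def by auto
    show "deg (F' - F) i \<le> deg (F - F') i" if "i \<in> A" "pi i \<noteq> 0" for i
      using that deg_F' happy_bidder_saturated[OF happy_i] fin(1,2)
      by (intro deg_Diff_le_Diff) (auto simp: pi_def)
    show "deg (F' - F) j \<le> deg (F - F') j" if "j \<in> B" "p j \<noteq> 0" for j
    proof -
      have "b j \<le> deg F j" using assms(9) that by force
      then show ?thesis
        using that deg_F' fin(1,2) by (intro deg_Diff_le_Diff) force+
    qed
  qed
  ultimately show ?thesis by linarith
qed

theorem lemma2: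
  fixes A B :: "'v set" and E :: "('v \<times> 'v) set" and w :: "'v \<times> 'v \<Rightarrow> real"
    and b :: "'v \<Rightarrow> nat" and eps :: real and p :: "'v \<Rightarrow> real"
    and F Fstar :: "('v \<times> 'v) set"
  assumes "finite A" and "finite B" and "A \<inter> B = {}" and "E \<subseteq> A \<times> B"
    and "\<forall>e \<in> E. w e \<ge> 0"
    and "\<forall>v \<in> A \<union> B. b v \<ge> 1"
    and "eps > 0"
    and "\<forall>j \<in> B. p j \<ge> 0"
    and "b_matching A B E b F"
    and "happy A E b w eps p F"
    and "\<forall>j \<in> B. deg F j < b j \<longrightarrow> p j = 0"
    and "max_weight_b_matching A B E b w Fstar"
  shows "wt w F \<ge> (1 - eps) * wt w Fstar"
proof -
  have Fstar: "b_matching A B E b Fstar"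
    using assms(12) unfolding max_weight_b_matching_def by auto
  have "finite E"
    using assms(1,2,4) by (simp add: finite_subset)
  then have fin: "finite F" "finite Fstar"
    using assms(9) Fstar unfolding b_matching_def by (auto intro: finite_subset)
  have exchange: "(1 - eps) * wt w (Fstar - F) \<le> wt w (F - Fstar)"
    using happy_exchange_bound[OF assms(1-4,8,9) Fstar assms(10,11)] .
  have "0 \<le> wt w (F \<inter> Fstar)"
    using assms(5,9) unfolding wt_def b_matching_def by (intro sum_nonneg) auto
  then have common: "(1 - eps) * wt w (F \<inter> Fstar) \<le> wt w (F \<inter> Fstar)"
    using assms(7) mult_nonneg_nonneg[of eps] by (simp add: left_diff_distrib)
  have "wt w F = wt w (F \<inter> Fstar) + wt w (F - Fstar)"
    "wt w Fstar = wt w (F \<inter> Fstar) + wt w (Fstar - F)"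
    unfolding wt_def using sum.Int_Diff[OF fin(1), of w Fstar] sum.Int_Diff[OF fin(2), of w F]
    by (simp_all add: Int_commute)
  then show ?thesis
    using exchange common by (simp add: distrib_left)
qed

end
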